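(* For every integer $n>61$ there is no balanced permutation sequence of length $n$. In particular, only finitely many positive integers $n$ admit a balanced permutation sequence of length $n$.
   Context: Let $n$ be a positive integer, $N$ a set of $n$ players and $[n]=\{1,\ldots,n\}$ a set of $n$ items. A permutation sequence of length $n$ is an ordered tuple $(\pi_1,\ldots,\pi_n)$ of bijections $\pi_t : N\to[n]$; on day $t$ player $i$ receives item $\pi_t(i)$. For $t\in[n]$ and $i\in N$, $Z_i^t$ is the multiset $\{\pi_1(i),\ldots,\pi_t(i)\}$, and for $j\in[t]$, $Z_i^t[j]$ is the $j$-th smallest element of $Z_i^t$ (counted with multiplicity). The sequence is called balanced if for every $t\in[n]$, every $i\in N$ and every $j\in[t]$: $Z_i^t[j]\le \lceil jn/t\rceil$. *)

theory Defs
  imports Complex_Main "HOL-Library.Multiset"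
begin

(* A permutation sequence of length n on player set N: days t = 1..n,
   pi t : N -> {1..n} a bijection; on day t player i gets item pi t i. *)
definition perm_seq :: "'a set \<Rightarrow> nat \<Rightarrow> (nat \<Rightarrow> 'a \<Rightarrow> nat) \<Rightarrow> bool" where
  "perm_seq N n \<pi> \<longleftrightarrow> finite N \<and> card N = n \<and> (\<forall>t\<in>{1..n}. bij_betw (\<pi> t) N {1..n})"

definition Z :: "(nat \<Rightarrow> 'a \<Rightarrow> nat) \<Rightarrow> 'a \<Rightarrow> nat \<Rightarrow> nat multiset" where
  "Z \<pi> i t = image_mset (\<lambda>s. \<pi> s i) (mset_set {1..t})"

definition Zj :: "(nat \<Rightarrow> 'a \<Rightarrow> nat) \<Rightarrow> 'a \<Rightarrow> nat \<Rightarrow> nat \<Rightarrow> nat" where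
  "Zj \<pi> i t j = sorted_list_of_multiset (Z \<pi> i t) ! (j - 1)"

definition balanced :: "'a set \<Rightarrow> nat \<Rightarrow> (nat \<Rightarrow> 'a \<Rightarrow> nat) \<Rightarrow> bool" where
  "balanced N n \<pi> \<longleftrightarrow> perm_seq N n \<pi> \<and>
     (\<forall>t\<in>{1..n}. \<forall>i\<in>N. \<forall>j\<in>{1..t}.
        real (Zj \<pi> i t j) \<le> real_of_int \<lceil>real j * real n / real t\<rceil>)"

end

theory Submission
  imports Defs
begin

(* Write d_i(t, v) for the number of days s <= t on which
   player i gets an item <= v; balancedness says d_i(t, ceil(j n / t)) >= j, and since every day
   is a bijection, the sum of d_i(t, v) over all players is exactly t v. With a = ceil(n/4),
   b = ceil(n/3), h = ceil(n/2), every player has d_i(3, b) + d_i(4, h) >= 1 + 2, and each of the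
   b - a players whose day-3 item lies in (a, b] has one more. Summing gives
   3 n + (b - a) <= 3 b + 4 h, which fails as soon as n >= 50. *)

definition days_le :: "(nat \<Rightarrow> 'a \<Rightarrow> nat) \<Rightarrow> 'a \<Rightarrow> nat \<Rightarrow> nat \<Rightarrow> nat" where
  "days_le \<pi> i t v = card {s \<in> {1..t}. \<pi> s i \<le> v}"

lemma days_le_0 [simp]: "days_le \<pi> i 0 v = 0"
  by (simp add: days_le_def)

lemma days_le_Suc: "days_le \<pi> i (Suc t) v = days_le \<pi> i t v + of_bool (\<pi> (Suc t) i \<le> v)"
proof -
  have "{s \<in> {1..Suc t}. \<pi> s i \<le> v} =
        (if \<pi> (Suc t) i \<le> v then insert (Suc t) {s \<in> {1..t}. \<pi> s i \<le> v}
         else {s \<in> {1..t}. \<pi> s i \<le> v})"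
    by (auto simp: le_Suc_eq)
  then show ?thesis
    unfolding days_le_def by simp
qed

lemma nat_ceiling_of_nat_divide:
  assumes "0 < t"
  shows "nat \<lceil>real m / real t\<rceil> = (m + t - 1) div t"
proof -
  define q where "q = (m + t - 1) div t"
  have "m + t - 1 = q * t + (m + t - 1) mod t"
    unfolding q_def by simp
  moreover have "(m + t - 1) mod t < t" using assms by simp
  ultimately have "m \<le> q * t" "q * t < m + t" by linarith+
  then have "real m \<le> real q * real t" "real q * real t < real m + real t"
    by (simp_all only: of_nat_le_iff of_nat_less_iff flip: of_nat_mult of_nat_add)
  then have "real_of_int (int q) - 1 < real m / real t" "real m / real t \<le> real_of_int (int q)"
    using assms by (simp_all add: field_simps)
  then have "\<lceil>real m / real t\<rceil> = int q" by (intro ceiling_unique) auto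
  then show ?thesis unfolding q_def by simp
qed

lemma sorted_nth_le_imp_less_length_filter:
  fixes xs :: "'b::linorder list"
  assumes "sorted xs" "j < length xs" "xs ! j \<le> v"
  shows "j < length (filter (\<lambda>x. x \<le> v) xs)"
proof -
  have "xs ! k \<le> v" if "k \<le> j" for k
    using sorted_nth_mono[OF assms(1) that assms(2)] assms(3) by simp
  then have "\<forall>x \<in> set (take (Suc j) xs). x \<le> v"
    by (auto simp: in_set_conv_nth)
  then have "filter (\<lambda>x. x \<le> v) (take (Suc j) xs) = take (Suc j) xs"
    by simp
  then have "length (filter (\<lambda>x. x \<le> v) (take (Suc j) xs)) = Suc j"
    using assms(2) by simp
  moreover have "filter (\<lambda>x. x \<le> v) xs =
      filter (\<lambda>x. x \<le> v) (take (Suc j) xs) @ filter (\<lambda>x. x \<le> v) (drop (Suc j) xs)"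
    by (metis append_take_drop_id filter_append)
  ultimately show ?thesis by simp
qed

lemma nth_sorted_list_of_multiset_le_imp_less_size:
  fixes M :: "'b::linorder multiset"
  assumes "j < size M" "sorted_list_of_multiset M ! j \<le> v"
  shows "j < size {# x \<in># M. x \<le> v #}"
proof -
  have "j < length (filter (\<lambda>x. x \<le> v) (sorted_list_of_multiset M))"
    using assms by (intro sorted_nth_le_imp_less_length_filter) (auto simp flip: size_mset)
  then show ?thesis
    by (metis mset_filter mset_sorted_list_of_multiset size_mset)
qed

lemma balanced_imp_days_le:
  assumes "balanced N n \<pi>" "t \<in> {1..n}" "i \<in> N" "j \<in> {1..t}" "(j * n + t - 1) div t \<le> v"
  shows "j \<le> days_le \<pi> i t v"
proof -
  have "real (Zj \<pi> i t j) \<le> real_of_int \<lceil>real (j * n) / real t\<rceil>"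
    using assms unfolding balanced_def by auto
  then have "Zj \<pi> i t j \<le> nat \<lceil>real (j * n) / real t\<rceil>"
    by linarith
  moreover have "nat \<lceil>real (j * n) / real t\<rceil> = (j * n + t - 1) div t"
    using assms(2) by (intro nat_ceiling_of_nat_divide) simp
  ultimately have "Zj \<pi> i t j \<le> v"
    using assms(5) by simp
  moreover have "size (Z \<pi> i t) = t" and "size {# x \<in># Z \<pi> i t. x \<le> v #} = days_le \<pi> i t v"
    by (simp_all add: Z_def days_le_def filter_mset_image_mset)
  ultimately show ?thesis
    using nth_sorted_list_of_multiset_le_imp_less_size[of "j - 1" "Z \<pi> i t"] assms(4)
    unfolding Zj_def by fastforce
qed

lemma card_le_of_bij_betw:
  assumes "bij_betw f A {1..n}" "v \<le> n"
  shows "card {x \<in> A. f x \<le> v} = v"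
proof -
  have "inj_on f {x \<in> A. f x \<le> v}"
    using assms(1) by (auto simp: bij_betw_def intro: inj_on_subset)
  moreover have "f ` {x \<in> A. f x \<le> v} = f ` A \<inter> {..v}"
    by auto
  then have "f ` {x \<in> A. f x \<le> v} = {1..v}"
    using assms by (auto simp: bij_betw_def)
  ultimately show ?thesis
    by (metis card_atLeastAtMost card_image diff_Suc_1)
qed

lemma card_between_of_bij_betw:
  assumes "bij_betw f A {1..n}" "a \<le> b" "b \<le> n"
  shows "card {x \<in> A. a < f x \<and> f x \<le> b} = b - a"
proof -
  have "{x \<in> A. a < f x \<and> f x \<le> b} = {x \<in> A. f x \<le> b} - {x \<in> A. f x \<le> a}"
    by auto
  moreover have "finite A"
    using assms(1) bij_betw_finite by blast
  ultimately show ?thesis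
    using assms by (simp add: card_Diff_subset card_le_of_bij_betw subset_iff)
qed

lemma sum_days_le:
  assumes "perm_seq N n \<pi>" "t \<le> n" "v \<le> n"
  shows "(\<Sum>i\<in>N. days_le \<pi> i t v) = t * v"
proof -
  have "finite N" using assms(1) by (simp add: perm_seq_def)
  have "(\<Sum>i\<in>N. days_le \<pi> i t v) = (\<Sum>i\<in>N. \<Sum>s\<in>{1..t}. of_bool (\<pi> s i \<le> v))"
    by (simp add: days_le_def Int_def)
  also have "\<dots> = (\<Sum>s\<in>{1..t}. \<Sum>i\<in>N. of_bool (\<pi> s i \<le> v))"
    by (rule sum.swap)
  also have "\<dots> = (\<Sum>s\<in>{1..t}. card {i \<in> N. \<pi> s i \<le> v})"
    using \<open>finite N\<close> by (simp add: Int_def)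
  also have "\<dots> = (\<Sum>s\<in>{1..t}. v)"
    using assms by (intro sum.cong refl card_le_of_bij_betw) (auto simp: perm_seq_def)
  finally show ?thesis by simp
qed

lemma mult_card_add_card_le_sum:
  fixes f :: "'b \<Rightarrow> nat"
  assumes "finite A" "B \<subseteq> A" "\<And>x. x \<in> A \<Longrightarrow> c + of_bool (x \<in> B) \<le> f x"
  shows "c * card A + card B \<le> sum f A"
proof -
  have "(\<Sum>x\<in>A. c + of_bool (x \<in> B)) = c * card A + card B"
    using assms(1,2) by (simp add: sum.distrib Int_absorb1 Int_commute)
  moreover have "(\<Sum>x\<in>A. c + of_bool (x \<in> B)) \<le> sum f A"
    using assms(3) by (rule sum_mono)
  ultimately show ?thesis by simp
qed

(* Let the day-3 item lie in (a, b]. Either one of days 1, 2 also has an item <= b, or the item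
   <= a among days 1..4 comes on day 4; then, with the day among 1, 2 having an item <= h, three of
   the days 1..4 have an item <= h. *)
lemma days_le_extra_if_mid_item:
  assumes "a \<le> b" "b \<le> h"
    and "1 \<le> days_le \<pi> i 2 h" "1 \<le> days_le \<pi> i 3 b" "1 \<le> days_le \<pi> i 4 a" "2 \<le> days_le \<pi> i 4 h"
  shows "3 + of_bool (a < \<pi> 3 i \<and> \<pi> 3 i \<le> b) \<le> days_le \<pi> i 3 b + days_le \<pi> i 4 h"
  using assms by (auto simp: days_le_Suc numeral_eq_Suc of_bool_def split: if_splits)

lemma not_balanced_if_gt_49:
  assumes "49 < n"
  shows "\<not> balanced N n \<pi>"
proof
  assume bal: "balanced N n \<pi>"
  then have perm: "perm_seq N n \<pi>" by (simp add: balanced_def)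
  then have "finite N" "card N = n" "bij_betw (\<pi> 3) N {1..n}"
    using assms by (auto simp: perm_seq_def)
  define a b h where "a = (n + 3) div 4" and "b = (n + 2) div 3" and "h = (n + 1) div 2"
  have "a \<le> b" "b \<le> h" "h \<le> n" "4 * a \<le> n + 3" "3 * b \<le> n + 2" "2 * h \<le> n + 1"
    unfolding a_def b_def h_def by linarith+
  define P where "P = {i \<in> N. a < \<pi> 3 i \<and> \<pi> 3 i \<le> b}"
  have "card P = b - a"
    unfolding P_def using \<open>a \<le> b\<close> \<open>b \<le> h\<close> \<open>h \<le> n\<close>
    by (intro card_between_of_bij_betw[OF \<open>bij_betw (\<pi> 3) N {1..n}\<close>]) auto
  have "3 + of_bool (i \<in> P) \<le> days_le \<pi> i 3 b + days_le \<pi> i 4 h" if "i \<in> N" for i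
  proof -
    have "1 \<le> days_le \<pi> i 2 h" "1 \<le> days_le \<pi> i 3 b" "1 \<le> days_le \<pi> i 4 a"
      using that assms unfolding a_def b_def h_def by (auto intro: balanced_imp_days_le[OF bal])
    moreover have "2 \<le> days_le \<pi> i 4 h"
      using that assms unfolding h_def by (intro balanced_imp_days_le[OF bal]) auto
    ultimately have "3 + of_bool (a < \<pi> 3 i \<and> \<pi> 3 i \<le> b) \<le> days_le \<pi> i 3 b + days_le \<pi> i 4 h"
      using \<open>a \<le> b\<close> \<open>b \<le> h\<close> by (intro days_le_extra_if_mid_item)
    then show ?thesis
      using that unfolding P_def by simp
  qed
  then have "3 * n + card P \<le> (\<Sum>i\<in>N. days_le \<pi> i 3 b + days_le \<pi> i 4 h)"
    using mult_card_add_card_le_sum[of N P 3] \<open>finite N\<close> \<open>card N = n\<close> P_def by auto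
  also have "\<dots> = 3 * b + 4 * h"
    using sum_days_le[OF perm] assms \<open>b \<le> h\<close> \<open>h \<le> n\<close> by (simp add: sum.distrib)
  finally show False
    using \<open>card P = b - a\<close> \<open>a \<le> b\<close> \<open>4 * a \<le> n + 3\<close> \<open>3 * b \<le> n + 2\<close> \<open>2 * h \<le> n + 1\<close> assms
    by linarith
qed

theorem mainTheorem4:
  "(\<forall>(n::nat) (N::'a set) \<pi>. n > 61 \<longrightarrow> \<not> balanced N n \<pi>) \<and>
   finite {n::nat. n > 0 \<and> (\<exists>(N::'a set) \<pi>. balanced N n \<pi>)}"
proof
  show "\<forall>(n::nat) (N::'a set) \<pi>. n > 61 \<longrightarrow> \<not> balanced N n \<pi>"
    by (intro allI impI not_balanced_if_gt_49) simp
  have "n \<le> 49" if "balanced (N::'a set) n \<pi>" for n N \<pi>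
    using not_balanced_if_gt_49 that leI by metis
  then have "{n::nat. n > 0 \<and> (\<exists>(N::'a set) \<pi>. balanced N n \<pi>)} \<subseteq> {..49}"
    by auto
  then show "finite {n::nat. n > 0 \<and> (\<exists>(N::'a set) \<pi>. balanced N n \<pi>)}"
    using finite_subset by blast
qed

end
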